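(* For any residuated semigroup $\mathbf A$ the following are equivalent: (1) $\mathbf A$ is balanced; (2) $\mathbf A$ satisfies $x\backslash x= x/x$, $y\le (x/x)y$ and $y\le y(x\backslash x)$ for all $x,y$; (3) $\mathbf A$ satisfies $(x\backslash x)y=y(x\backslash x)$ and $y\le y(x\backslash x)$ for all $x,y$; (4) $\mathbf A$ satisfies $(x/x)y=y(x/x)$ and $y\le (x/x)y$ for all $x,y$.
   Context: A residuated semigroup is a structure $\langle A,\le,\cdot,\backslash,/\rangle$ where $\langle A,\le\rangle$ is a poset, $\langle A,\cdot\rangle$ is a semigroup (we write $xy$ for $x\cdot y$), and for all $x,y,z$: $xy\le z\iff x\le z/y\iff y\le x\backslash z$. An element $p$ is positive if $a\le pa$ and $a\le ap$ for all $a\in A$. Self-residuals are elements of the form $a\backslash a$ or $a/a$. A residuated semigroup is balanced if it satisfies $x\backslash x=x/x$ for all $x$ and all its self-residuals are positive. *)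

theory Defs
  imports Main
begin

definition residuated_semigroup ::
  "('a::{order,semigroup_mult} \<Rightarrow> 'a \<Rightarrow> 'a) \<Rightarrow> ('a \<Rightarrow> 'a \<Rightarrow> 'a) \<Rightarrow> bool" where
  "residuated_semigroup ldiv rdiv \<longleftrightarrow>
     (\<forall>x y z. (x * y \<le> z \<longleftrightarrow> x \<le> rdiv z y) \<and> (x * y \<le> z \<longleftrightarrow> y \<le> ldiv x z))"

definition positive :: "'a::{order,semigroup_mult} \<Rightarrow> bool" where
  "positive p \<longleftrightarrow> (\<forall>a. a \<le> p * a \<and> a \<le> a * p)"

definition self_residual ::
  "('a::{order,semigroup_mult} \<Rightarrow> 'a \<Rightarrow> 'a) \<Rightarrow> ('a \<Rightarrow> 'a \<Rightarrow> 'a) \<Rightarrow> 'a \<Rightarrow> bool" where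
  "self_residual ldiv rdiv s \<longleftrightarrow> (\<exists>a. s = ldiv a a \<or> s = rdiv a a)"

definition balanced ::
  "('a::{order,semigroup_mult} \<Rightarrow> 'a \<Rightarrow> 'a) \<Rightarrow> ('a \<Rightarrow> 'a \<Rightarrow> 'a) \<Rightarrow> bool" where
  "balanced ldiv rdiv \<longleftrightarrow>
     (\<forall>x. ldiv x x = rdiv x x) \<and> (\<forall>s. self_residual ldiv rdiv s \<longrightarrow> positive s)"

end

theory Submission
  imports Defs
begin

text \<open>Condition (2) is just the definition of balanced unfolded, and the opposite semigroup
  (with the two residuals exchanged) is again residuated; it swaps conditions (3) and (4) while
  fixing (2). So it suffices to show (2) \<longleftrightarrow> (3). If all self-residuals are positive, then
  u = x\x satisfies uu \<le> u, hence u(uy) \<le> uy, which by balancedness turns into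
  (uy)u \<le> uy, so uyu = uy; symmetrically uyu = yu. Conversely, if u = x\x is central
  and right positive, then xu = x = ux gives x\x \<le> x/x and (x/x)x = x; applying the same to
  v = x/x with its own left residual v\v shows that v is central, whence xv = x and
  x/x \<le> x\x.\<close>

locale residuated =
  fixes mult :: "'a::order \<Rightarrow> 'a \<Rightarrow> 'a" (infixl "\<cdot>" 70)
    and ld :: "'a \<Rightarrow> 'a \<Rightarrow> 'a"
    and rd :: "'a \<Rightarrow> 'a \<Rightarrow> 'a"
  assumes mult_assoc: "(x \<cdot> y) \<cdot> z = x \<cdot> (y \<cdot> z)"
    and le_rd_iff: "x \<cdot> y \<le> z \<longleftrightarrow> x \<le> rd z y"
    and le_ld_iff: "x \<cdot> y \<le> z \<longleftrightarrow> y \<le> ld x z"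
begin

lemma residuated_dual: "residuated (\<lambda>x y. y \<cdot> x) (\<lambda>x z. rd z x) (\<lambda>z y. ld y z)"
  by unfold_locales (fact mult_assoc[symmetric] le_ld_iff le_rd_iff)+

lemma mult_ld_le: "x \<cdot> ld x z \<le> z"
  using le_ld_iff by blast

lemma rd_mult_le: "rd z y \<cdot> y \<le> z"
  using le_rd_iff by blast

lemma mult_right_mono: "a \<le> b \<Longrightarrow> a \<cdot> c \<le> b \<cdot> c"
  using le_rd_iff order_trans by blast

lemma mult_left_mono: "a \<le> b \<Longrightarrow> c \<cdot> a \<le> c \<cdot> b"
  using le_ld_iff order_trans by blast

lemma ld_self_mult_le: "ld x x \<cdot> ld x x \<le> ld x x"
proof -
  have "x \<cdot> (ld x x \<cdot> ld x x) = (x \<cdot> ld x x) \<cdot> ld x x"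
    by (simp add: mult_assoc)
  also have "\<dots> \<le> x \<cdot> ld x x"
    by (intro mult_right_mono mult_ld_le)
  also have "\<dots> \<le> x"
    by (rule mult_ld_le)
  finally show ?thesis
    using le_ld_iff by blast
qed

lemma right_absorb_if_left_absorb:
  assumes "ld w w = rd w w" and "u \<cdot> w \<le> w"
  shows "w \<cdot> u \<le> w"
  using assms le_rd_iff le_ld_iff by metis

lemma ld_self_central_if_balanced:
  assumes bal: "\<forall>x y. ld x x = rd x x \<and> y \<le> rd x x \<cdot> y \<and> y \<le> y \<cdot> ld x x"
  shows "ld x x \<cdot> y = y \<cdot> ld x x"
proof -
  define u where "u = ld x x"
  have uu: "u \<cdot> u \<le> u"
    unfolding u_def by (rule ld_self_mult_le)
  have "u \<cdot> (u \<cdot> y) \<le> u \<cdot> y"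
    using mult_right_mono[OF uu] by (simp add: mult_assoc)
  then have "(u \<cdot> y) \<cdot> u \<le> u \<cdot> y"
    using bal by (intro right_absorb_if_left_absorb) auto
  moreover have "u \<cdot> y \<le> (u \<cdot> y) \<cdot> u"
    using bal u_def by blast
  ultimately have left: "u \<cdot> y \<cdot> u = u \<cdot> y"
    by (rule antisym)
  have "(y \<cdot> u) \<cdot> u \<le> y \<cdot> u"
    using mult_left_mono[OF uu] by (simp add: mult_assoc)
  then have "u \<cdot> (y \<cdot> u) \<le> y \<cdot> u"
    using bal by (intro residuated.right_absorb_if_left_absorb[OF residuated_dual]) auto
  moreover have "y \<cdot> u \<le> u \<cdot> (y \<cdot> u)"
    using bal u_def by metis
  ultimately have right: "u \<cdot> y \<cdot> u = y \<cdot> u"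
    by (simp add: antisym mult_assoc)
  show ?thesis
    using left right u_def by simp
qed

lemma ld_self_eq_rd_self_if_central:
  assumes central: "\<forall>x y. ld x x \<cdot> y = y \<cdot> ld x x \<and> y \<le> y \<cdot> ld x x"
  shows "ld x x = rd x x"
proof -
  define u v where "u = ld x x" and "v = rd x x"
  have "x \<cdot> u = x"
    using central mult_ld_le u_def by (blast intro: antisym)
  then have ux: "u \<cdot> x = x"
    using central u_def by metis
  then have uv: "u \<le> v"
    using le_rd_iff v_def by (metis order_refl)
  have vx: "v \<cdot> x = x"
    using mult_right_mono[OF uv, of x] rd_mult_le[of x x] ux v_def by simp
  have "v \<cdot> v \<le> v"
    using vx le_rd_iff v_def by (metis mult_assoc order_refl)
  then have "v \<le> ld v v"
    using le_ld_iff by blast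
  moreover have "ld v v \<le> v"
  proof -
    have "ld v v \<cdot> x = (v \<cdot> ld v v) \<cdot> x"
      using vx central by (metis mult_assoc)
    also have "\<dots> \<le> x"
      using mult_right_mono[OF mult_ld_le[of v v], of x] vx by simp
    finally show ?thesis
      using le_rd_iff v_def by blast
  qed
  ultimately have "ld v v = v"
    by (simp add: antisym)
  then have "x \<cdot> v \<le> x"
    using central vx by metis
  then have "v \<le> u"
    using le_ld_iff u_def by blast
  with uv show ?thesis
    using u_def v_def by simp
qed

lemma balanced_iff_ld_self_central:
  "(\<forall>x y. ld x x = rd x x \<and> y \<le> rd x x \<cdot> y \<and> y \<le> y \<cdot> ld x x)
   \<longleftrightarrow> (\<forall>x y. ld x x \<cdot> y = y \<cdot> ld x x \<and> y \<le> y \<cdot> ld x x)"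
  using ld_self_central_if_balanced ld_self_eq_rd_self_if_central by metis

end

lemma residuated_semigroup_imp_residuated:
  assumes "residuated_semigroup ldiv rdiv"
  shows "residuated (*) ldiv rdiv"
  using assms unfolding residuated_semigroup_def residuated_def
  by (metis mult.assoc)

lemma balanced_iff:
  "balanced ldiv rdiv
   \<longleftrightarrow> (\<forall>x y. ldiv x x = rdiv x x \<and> y \<le> rdiv x x * y \<and> y \<le> y * ldiv x x)"
  unfolding balanced_def self_residual_def positive_def by metis

theorem proposition3p2:
  fixes ldiv rdiv :: "'a::{order,semigroup_mult} \<Rightarrow> 'a \<Rightarrow> 'a"
  assumes "residuated_semigroup ldiv rdiv"
  shows "(balanced ldiv rdiv
          \<longleftrightarrow> (\<forall>x y. ldiv x x = rdiv x x \<and> y \<le> rdiv x x * y \<and> y \<le> y * ldiv x x))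
       \<and> (balanced ldiv rdiv
          \<longleftrightarrow> (\<forall>x y. ldiv x x * y = y * ldiv x x \<and> y \<le> y * ldiv x x))
       \<and> (balanced ldiv rdiv
          \<longleftrightarrow> (\<forall>x y. rdiv x x * y = y * rdiv x x \<and> y \<le> rdiv x x * y))"
proof -
  interpret residuated "(*)" ldiv rdiv
    using assms by (rule residuated_semigroup_imp_residuated)
  interpret dual: residuated "\<lambda>x y. y * x" "\<lambda>x z. rdiv z x" "\<lambda>z y. ldiv y z"
    by (rule residuated_dual)
  have ld_central: "balanced ldiv rdiv
        \<longleftrightarrow> (\<forall>x y. ldiv x x * y = y * ldiv x x \<and> y \<le> y * ldiv x x)"
    unfolding balanced_iff by (rule balanced_iff_ld_self_central)
  have "balanced ldiv rdiv
        \<longleftrightarrow> (\<forall>x y. rdiv x x = ldiv x x \<and> y \<le> y * ldiv x x \<and> y \<le> rdiv x x * y)"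
    unfolding balanced_iff by auto
  also have "\<dots> \<longleftrightarrow> (\<forall>x y. y * rdiv x x = rdiv x x * y \<and> y \<le> rdiv x x * y)"
    by (rule dual.balanced_iff_ld_self_central)
  also have "\<dots> \<longleftrightarrow> (\<forall>x y. rdiv x x * y = y * rdiv x x \<and> y \<le> rdiv x x * y)"
    by (auto simp: eq_commute)
  finally show ?thesis
    using balanced_iff ld_central by blast
qed

end
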